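(* Consider the coordination game described in the context, in which each agent $i$ observes $x_i=\theta+\epsilon^x_i$ and $y_i=A+\epsilon^y_i$, where $(\epsilon^x_i,\epsilon^y_i)$ has joint density $f(\epsilon^x,\epsilon^y)$. Suppose that $\epsilon^y_i\in[-\sigma,\sigma]$, i.e. $f(\epsilon^x,\epsilon^y)=0$ for all $|\epsilon^y|>\sigma$ and all $\epsilon^x\in\mathbb{R}$, where $0<\sigma<\tfrac12$. Then there exists a continuum (an uncountable family) of distinct equilibria $A(\cdot)$.
   Context: A unit mass of agents $i\in[0,1]$ each choose $a_i\in\{0,1\}$ ($a_i=1$: attack the status quo). The aggregate attack is $A=\int_0^1 a_i\,di$. The status quo has strength $\theta\in\mathbb{R}$ and is abandoned iff $A\ge\theta$. An attacking agent pays cost $c\in(0,1)$ and gets $1$ if the status quo is abandoned (net $1-c$), otherwise net $-c$; not attacking yields $0$. Agents hold an (improper) uniform prior over $\theta$ on $\mathbb{R}$. Agent $i$ receives private signals $x_i=\theta+\epsilon^x_i$ and $y_i=A+\epsilon^y_i$, where the error pairs $(\epsilon^x_i,\epsilon^y_i)$ are independent across agents with joint density $f$; the structure is common knowledge. Given a conjectured (measurable) aggregate attack function $A:\mathbb{R}\to[0,1]$, the posterior of an agent with signals $(x,y)$ is $P[\theta\in S\mid x,y,A(\cdot)]=\int_S f(x-\theta,y-A(\theta))\,d\theta\big/\int_{\mathbb{R}} f(x-\theta,y-A(\theta))\,d\theta$ (equivalently, the limit as $N\to\infty$ of the posterior under a uniform prior on $[t-N,t+N]$). An agent attacks iff $P[A(\theta)\ge\theta\mid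 x,y,A(\cdot)]\ge c$. An equilibrium is a function $A:\mathbb{R}\to[0,1]$ such that for all $\theta\in\mathbb{R}$, $A(\theta)=\int_{\mathbb{R}^2}\chi\{(\epsilon^x,\epsilon^y): P[A(\theta')\ge\theta'\mid x=\theta+\epsilon^x,\,y=A(\theta)+\epsilon^y,\,A(\cdot)]\ge c\}\,f(\epsilon^x,\epsilon^y)\,d\epsilon^x d\epsilon^y$, where $\theta'$ denotes the random fundamental under the posterior and $\chi$ is the indicator function. *)

theory Defs
  imports "HOL-Analysis.Analysis"
begin

text \<open>Posterior probability of a set S of fundamentals, for an agent with signals (x,y),
  given the joint error density f and the conjectured aggregate attack function A
  (improper uniform prior). Real division, so 0/0 = 0 by convention.\<close>
definition posterior :: "(real \<Rightarrow> real \<Rightarrow> real) \<Rightarrow> (real \<Rightarrow> real) \<Rightarrow> real \<Rightarrow> real \<Rightarrow> real set \<Rightarrow> real" where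
  "posterior f A x y S =
     (\<integral>\<theta>. indicator S \<theta> * f (x - \<theta>) (y - A \<theta>) \<partial>lborel) /
     (\<integral>\<theta>. f (x - \<theta>) (y - A \<theta>) \<partial>lborel)"

text \<open>An agent with signals (x,y) attacks iff the posterior probability that the
  status quo is abandoned (A(theta) >= theta) is at least c.\<close>
definition attacks :: "(real \<Rightarrow> real \<Rightarrow> real) \<Rightarrow> real \<Rightarrow> (real \<Rightarrow> real) \<Rightarrow> real \<Rightarrow> real \<Rightarrow> bool" where
  "attacks f c A x y \<longleftrightarrow> c \<le> posterior f A x y {\<theta>. \<theta> \<le> A \<theta>}"

definition is_equilibrium :: "(real \<Rightarrow> real \<Rightarrow> real) \<Rightarrow> real \<Rightarrow> (real \<Rightarrow> real) \<Rightarrow> bool" where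
  "is_equilibrium f c A \<longleftrightarrow>
     A \<in> borel_measurable borel \<and>
     (\<forall>\<theta>. 0 \<le> A \<theta> \<and> A \<theta> \<le> 1) \<and>
     (\<forall>\<theta>. A \<theta> =
        (\<integral>e. indicator {e :: real \<times> real. attacks f c A (\<theta> + fst e) (A \<theta> + snd e)} e
               * f (fst e) (snd e) \<partial>lborel))"

end

theory Submission
  imports Defs
begin

text \<open>
  Since the noise in the signal y of the aggregate attack is smaller than 1/2, y reveals whether
  the attack is 0 or 1. Hence every threshold strategy A_t = indicator of (-\<infinity>, t] with
  0 \<le> t \<le> 1 is self-confirming: when A(\<theta>) = 0, every agent infers \<theta> > t, where the status quo
  survives, so the posterior of abandonment is 0 and nobody attacks; when A(\<theta>) = 1, every agent
  infers \<theta> \<le> t, so the posterior is 1 and everybody attacks. The only subtlety is that the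
  posterior is 0/0 when its denominator, a tail integral of the error density, vanishes; but the
  error pairs for which this happens carry no mass under f. Distinct thresholds give distinct
  equilibria, so there are uncountably many.
\<close>

lemma tail_integral_antimono:
  fixes g :: "real \<Rightarrow> real"
  assumes "integrable lborel g" and "\<And>x. 0 \<le> g x" and "s \<le> s'"
  shows "(LINT u:{s'..}|lborel. g u) \<le> (LINT u:{s..}|lborel. g u)"
  unfolding set_lebesgue_integral_def using assms
  by (intro integral_mono integrable_mult_indicator) (auto simp: indicator_def)

lemma tail_integral_nonneg:
  fixes g :: "real \<Rightarrow> real"
  assumes "\<And>x. 0 \<le> g x"
  shows "0 \<le> (LINT u:{s..}|lborel. g u)"
  unfolding set_lebesgue_integral_def using assms by (simp add: integral_nonneg)

lemma AE_tail_integral_pos: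
  fixes g :: "real \<Rightarrow> real"
  assumes g_int: "integrable lborel g" and g_nonneg: "\<And>x. 0 \<le> g x"
  shows "AE x in lborel. g x \<noteq> 0 \<longrightarrow> 0 < (LINT u:{x..}|lborel. g u)"
proof -
  \<comment> \<open>S is an up-ray; the rays [q, \<infinity>) with rational q \<in> S cover it except possibly for its minimum.\<close>
  define S where "S = {s. (LINT u:{s..}|lborel. g u) = 0}"
  have S_upward: "s' \<in> S" if "s \<in> S" "s \<le> s'" for s s'
    using that tail_integral_antimono[OF g_int g_nonneg, of s s'] tail_integral_nonneg[of g, OF g_nonneg]
    unfolding S_def by (simp add: order.eq_iff)
  have AE_above: "AE u in lborel. s \<le> u \<longrightarrow> g u = 0" if "s \<in> S" for s
  proof -
    have "integrable lborel (\<lambda>u. indicator {s..} u * g u)"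
      using integrable_mult_indicator[OF _ g_int, of "{s..}"] by simp
    then have "AE u in lborel. indicator {s..} u * g u = 0"
      using that g_nonneg unfolding S_def set_lebesgue_integral_def
      by (subst integral_nonneg_eq_0_iff_AE[symmetric]) auto
    then show ?thesis by eventually_elim (auto simp: indicator_def)
  qed
  have "countable (S \<inter> \<rat>)"
    by (rule countable_subset[OF _ countable_rat]) auto
  then have "AE u in lborel. \<forall>q\<in>S \<inter> \<rat>. q \<le> u \<longrightarrow> g u = 0"
    by (subst AE_ball_countable) (auto intro: AE_above)
  moreover have "AE u in lborel. u \<notin> {s \<in> S. \<forall>s'\<in>S. s \<le> s'}"
  proof (intro AE_not_in countable_imp_null_set_lborel)
    have "{s \<in> S. \<forall>s'\<in>S. s \<le> s'} \<subseteq> {Inf S}"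
      by (auto intro: cInf_eq_minimum[symmetric])
    then show "countable {s \<in> S. \<forall>s'\<in>S. s \<le> s'}"
      by (rule countable_subset) simp
  qed
  ultimately show ?thesis
  proof eventually_elim
    case (elim u)
    show ?case
    proof (intro impI)
      assume "g u \<noteq> 0"
      have "u \<notin> S"
      proof
        assume "u \<in> S"
        with elim(2) obtain s where "s \<in> S" "s < u" by force
        then obtain q where "q \<in> \<rat>" "s < q" "q < u" using Rats_dense_in_real by blast
        with \<open>s \<in> S\<close> have "q \<in> S \<inter> \<rat>" using S_upward by auto
        with elim(1) \<open>q < u\<close> \<open>g u \<noteq> 0\<close> show False by (meson less_imp_le)
      qed
      then show "0 < (LINT u:{u..}|lborel. g u)"
        using tail_integral_nonneg[of g, OF g_nonneg] by (simp add: S_def order_less_le)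
    qed
  qed
qed

lemma AE_pair_tail_integral_pos:
  fixes f :: "real \<Rightarrow> real \<Rightarrow> real" and d :: real
  assumes f_int: "integrable lborel (\<lambda>e :: real \<times> real. f (fst e) (snd e))"
    and f_nonneg: "\<And>a b. 0 \<le> f a b"
    and "0 \<le> d"
  shows "AE e in (lborel :: (real \<times> real) measure).
           f (fst e) (snd e) \<noteq> 0 \<longrightarrow> 0 < (LINT u:{fst e - d..}|lborel. f u (snd e))"
proof -
  have f_int': "integrable (lborel \<Otimes>\<^sub>M lborel) (\<lambda>e. f (fst e) (snd e))"
    using f_int by (simp add: lborel_prod)
  then have [measurable]: "(\<lambda>e. f (fst e) (snd e)) \<in> borel_measurable (lborel \<Otimes>\<^sub>M lborel)"
    by blast
  then have [measurable]: "case_prod f \<in> borel_measurable (lborel \<Otimes>\<^sub>M lborel)"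
    by (simp add: case_prod_beta')
  define P where "P a b \<longleftrightarrow> f a b \<noteq> 0 \<longrightarrow> 0 < (LINT u:{a - d..}|lborel. f u b)" for a b
  have tail_eq: "(LINT u:{s..}|lborel. g u) = (\<integral>u. (if s \<le> u then 1 else 0) * g u \<partial>lborel)"
    for s and g :: "real \<Rightarrow> real"
    by (simp add: set_lebesgue_integral_def indicator_def of_bool_def)
  have P_sets: "{p \<in> space (lborel \<Otimes>\<^sub>M lborel). P (fst p) (snd p)} \<in> sets (lborel \<Otimes>\<^sub>M lborel)"
    unfolding P_def tail_eq by measurable
  have "AE b in lborel. integrable lborel (\<lambda>a. f a b)"
    using lborel_pair.AE_integrable_snd[of f] f_int' by (simp add: case_prod_beta')
  then have "AE b in lborel. AE a in lborel. P a b"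
  proof eventually_elim
    case (elim b)
    from AE_tail_integral_pos[OF elim f_nonneg] show ?case
    proof eventually_elim
      case (elim a)
      then show ?case
        unfolding P_def
        using tail_integral_antimono[OF \<open>integrable lborel (\<lambda>u. f u b)\<close> f_nonneg, of "a - d" a] \<open>0 \<le> d\<close>
        by linarith
    qed
  qed
  then have "AE a in lborel. AE b in lborel. P a b"
    using lborel_pair.AE_commute[OF P_sets] by simp
  then have "AE p in lborel \<Otimes>\<^sub>M lborel. P (fst p) (snd p)"
    using lborel_pair.AE_pair_iff[OF P_sets] by simp
  then show ?thesis
    unfolding P_def lborel_prod .
qed

lemma borel_measurable_posterior:
  fixes f :: "real \<Rightarrow> real \<Rightarrow> real" and A :: "real \<Rightarrow> real"
  assumes f_meas: "(\<lambda>e :: real \<times> real. f (fst e) (snd e)) \<in> borel_measurable borel"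
    and [measurable]: "A \<in> borel_measurable borel" "S \<in> sets borel"
  shows "(\<lambda>p :: real \<times> real. posterior f A (fst p) (snd p) S) \<in> borel_measurable (borel \<Otimes>\<^sub>M borel)"
proof -
  have "(\<lambda>q. (fst (fst q) - snd q, snd (fst q) - A (snd q)))
      \<in> (borel \<Otimes>\<^sub>M borel) \<Otimes>\<^sub>M lborel \<rightarrow>\<^sub>M (borel :: (real \<times> real) measure)"
    by measurable
  from measurable_comp[OF this f_meas]
  have [measurable]: "(\<lambda>q. f (fst (fst q) - snd q) (snd (fst q) - A (snd q)))
      \<in> borel_measurable ((borel \<Otimes>\<^sub>M borel) \<Otimes>\<^sub>M lborel)"
    by (simp add: o_def)
  show ?thesis
    unfolding posterior_def
    by (intro borel_measurable_divide lborel.borel_measurable_lebesgue_integral) (simp_all add: case_prod_beta')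
qed

lemma sets_attacks_shifted:
  fixes f :: "real \<Rightarrow> real \<Rightarrow> real" and A :: "real \<Rightarrow> real"
  assumes f_meas: "(\<lambda>e :: real \<times> real. f (fst e) (snd e)) \<in> borel_measurable borel"
    and [measurable]: "A \<in> borel_measurable borel"
  shows "{e :: real \<times> real. attacks f c A (\<theta> + fst e) (a + snd e)} \<in> sets lborel"
proof -
  have [measurable]: "(\<lambda>p :: real \<times> real. posterior f A (fst p) (snd p) {\<theta>. \<theta> \<le> A \<theta>})
      \<in> borel_measurable (borel \<Otimes>\<^sub>M borel)"
    using f_meas by (rule borel_measurable_posterior) measurable
  have "{e \<in> space (borel \<Otimes>\<^sub>M borel). c \<le> posterior f A (fst (\<theta> + fst e, a + snd e)) (snd (\<theta> + fst e, a + snd e)) {\<theta>. \<theta> \<le> A \<theta>}}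
      \<in> sets (borel \<Otimes>\<^sub>M borel :: (real \<times> real) measure)"
    by measurable
  then have "{e \<in> space borel. c \<le> posterior f A (\<theta> + fst e) (a + snd e) {\<theta>. \<theta> \<le> A \<theta>}}
      \<in> sets (borel :: (real \<times> real) measure)"
    unfolding borel_prod by simp
  then show ?thesis
    by (simp add: attacks_def)
qed

definition threshold :: "real \<Rightarrow> real \<Rightarrow> real" where
  "threshold t \<theta> = (if \<theta> \<le> t then 1 else 0)"

lemma borel_measurable_threshold [measurable]: "threshold t \<in> borel_measurable borel"
  unfolding threshold_def by measurable

lemma threshold_abandon_set:
  assumes "0 \<le> t" "t \<le> 1"
  shows "{\<theta>. \<theta> \<le> threshold t \<theta>} = {..t}"
  using assms by (auto simp: threshold_def)

lemma inj_threshold: "inj threshold"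
proof (rule injI)
  fix s t assume "threshold s = threshold t"
  then have "threshold s s = threshold t s" "threshold s t = threshold t t"
    by simp_all
  then show "s = t"
    by (auto simp: threshold_def split: if_splits)
qed

lemma posterior_threshold_eq_0:
  fixes f :: "real \<Rightarrow> real \<Rightarrow> real"
  assumes supp: "\<And>a b. \<bar>b\<bar> > \<sigma> \<Longrightarrow> f a b = 0" and "\<sigma> < 1/2" and "\<bar>y\<bar> \<le> \<sigma>"
  shows "posterior f (threshold t) x y {..t} = 0"
proof -
  have "(\<lambda>\<theta>. indicator {..t} \<theta> * f (x - \<theta>) (y - threshold t \<theta>)) = (\<lambda>_. 0)"
    using assms by (auto simp: threshold_def indicator_def intro!: supp)
  then show ?thesis
    unfolding posterior_def by simp
qed

lemma posterior_threshold_eq_1: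
  fixes f :: "real \<Rightarrow> real \<Rightarrow> real"
  assumes supp: "\<And>a b. \<bar>b\<bar> > \<sigma> \<Longrightarrow> f a b = 0" and "\<sigma> < 1/2" and "\<bar>y - 1\<bar> \<le> \<sigma>"
    and tail_pos: "0 < (LINT u:{x - t..}|lborel. f u (y - 1))"
  shows "posterior f (threshold t) x y {..t} = 1"
proof -
  have restrict: "f (x - \<theta>) (y - threshold t \<theta>) = indicator {..t} \<theta> * f (x - \<theta>) (y - 1)" for \<theta>
    using assms(2,3) by (auto simp: threshold_def indicator_def intro!: supp)
  have reflect: "(\<integral>\<theta>. indicator {..t} \<theta> * f (x - \<theta>) (y - 1) \<partial>lborel) = (LINT u:{x - t..}|lborel. f u (y - 1))"
    unfolding set_lebesgue_integral_def
    by (subst lborel_integral_real_affine[where c = "-1" and t = x])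
       (auto simp: indicator_def intro!: Bochner_Integration.integral_cong)
  have idem: "indicator {..t} \<theta> * (indicator {..t} \<theta> * h) = indicator {..t} \<theta> * (h :: real)" for \<theta> h
    by (simp add: indicator_def)
  show ?thesis
    using tail_pos unfolding posterior_def restrict idem reflect by simp
qed

lemma is_equilibrium_threshold:
  fixes f :: "real \<Rightarrow> real \<Rightarrow> real" and c \<sigma> t :: real
  assumes c: "0 < c" "c \<le> 1"
    and f_meas: "(\<lambda>e :: real \<times> real. f (fst e) (snd e)) \<in> borel_measurable borel"
    and f_nonneg: "\<And>a b. 0 \<le> f a b"
    and f_int: "integrable lborel (\<lambda>e :: real \<times> real. f (fst e) (snd e))"
    and f_total: "(\<integral>e. f (fst e) (snd e) \<partial>(lborel :: (real \<times> real) measure)) = 1"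
    and supp: "\<And>a b. \<bar>b\<bar> > \<sigma> \<Longrightarrow> f a b = 0" and "\<sigma> < 1/2"
    and t: "0 \<le> t" "t \<le> 1"
  shows "is_equilibrium f c (threshold t)"
proof -
  have attacks_iff: "attacks f c (threshold t) x y \<longleftrightarrow> c \<le> posterior f (threshold t) x y {..t}" for x y
    by (simp add: attacks_def threshold_abandon_set[OF t])
  have small_noise: "\<bar>b\<bar> \<le> \<sigma>" if "f a b \<noteq> 0" for a b
    using supp that by force
  have "threshold t \<theta> =
      (\<integral>e. indicator {e. attacks f c (threshold t) (\<theta> + fst e) (threshold t \<theta> + snd e)} e
              * f (fst e) (snd e) \<partial>lborel)" for \<theta>
  proof (cases "\<theta> \<le> t")
    case False
    have "\<not> attacks f c (threshold t) (\<theta> + a) (threshold t \<theta> + b)" if "f a b \<noteq> 0" for a b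
      using False c posterior_threshold_eq_0[OF supp \<open>\<sigma> < 1/2\<close> small_noise[OF that]]
      by (simp add: attacks_iff threshold_def)
    then have "(\<lambda>e. indicator {e. attacks f c (threshold t) (\<theta> + fst e) (threshold t \<theta> + snd e)} e
              * f (fst e) (snd e)) = (\<lambda>_. 0)"
      by (intro ext) (metis indicator_simps(2) mem_Collect_eq mult_eq_0_iff)
    with False show ?thesis
      by (simp add: threshold_def)
  next
    case True
    then have "0 \<le> t - \<theta>"
      by simp
    from AE_pair_tail_integral_pos[OF f_int f_nonneg this]
    have "AE e in lborel. indicator {e. attacks f c (threshold t) (\<theta> + fst e) (threshold t \<theta> + snd e)} e
              * f (fst e) (snd e) = f (fst e) (snd e)"
    proof eventually_elim
      case (elim e)
      show ?case
      proof (cases "f (fst e) (snd e) = 0")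
        case False
        then have "posterior f (threshold t) (\<theta> + fst e) (1 + snd e) {..t} = 1"
          using elim small_noise[OF False]
          by (intro posterior_threshold_eq_1[OF supp \<open>\<sigma> < 1/2\<close>]) (auto simp: algebra_simps)
        with True c show ?thesis
          by (simp add: attacks_iff threshold_def)
      qed simp
    qed
    then have "(\<integral>e. indicator {e. attacks f c (threshold t) (\<theta> + fst e) (threshold t \<theta> + snd e)} e
              * f (fst e) (snd e) \<partial>lborel) = (\<integral>e. f (fst e) (snd e) \<partial>(lborel :: (real \<times> real) measure))"
      using sets_attacks_shifted[OF f_meas borel_measurable_threshold] f_meas
      by (intro integral_cong_AE) auto
    with True f_total show ?thesis
      by (simp add: threshold_def)
  qed
  then show ?thesis
    unfolding is_equilibrium_def by (simp add: threshold_def)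
qed

theorem proposition1:
  fixes f :: "real \<Rightarrow> real \<Rightarrow> real" and c \<sigma> :: real
  assumes c: "0 < c" "c < 1"
    and f_meas: "(\<lambda>e :: real \<times> real. f (fst e) (snd e)) \<in> borel_measurable borel"
    and f_nonneg: "\<And>a b. 0 \<le> f a b"
    and f_int: "integrable lborel (\<lambda>e :: real \<times> real. f (fst e) (snd e))"
    and f_total: "(\<integral>e. f (fst e) (snd e) \<partial>(lborel :: (real \<times> real) measure)) = 1"
    and \<sigma>: "0 < \<sigma>" "\<sigma> < 1/2"
    and supp: "\<And>a b. \<bar>b\<bar> > \<sigma> \<Longrightarrow> f a b = 0"
  shows "uncountable {A. is_equilibrium f c A}"
proof
  assume "countable {A. is_equilibrium f c A}"
  moreover have "threshold ` {0..1} \<subseteq> {A. is_equilibrium f c A}"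
    using is_equilibrium_threshold[OF _ _ f_meas f_nonneg f_int f_total supp \<sigma>(2)] c by auto
  ultimately have "countable (threshold ` {0..1})"
    by (rule countable_subset[rotated])
  then have "countable {0..1 :: real}"
    using countable_image_inj_on inj_threshold inj_on_subset by blast
  then show False
    using uncountable_closed_interval[of 0 1] by simp
qed

end
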